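(* Let $n\ge 1$ and let $x_k=-\cos\frac{k\pi}{n}$, $k=0,\dots,n$ (the Chebyshev points of the second kind). Let $\theta_0,\dots,\theta_n$ be real numbers and $\hat x_k:=(1+\theta_k)x_k$. Then for every $k\in\{0,\dots,n\}$, \[ \sum_{j\neq k}|r_{jk}(\mathbf{x},\hat{\mathbf{x}})|\le 2.6\,\|\theta\|_\infty\, n^2 . \]
   Context: $r_{jk}(\mathbf{x},\hat{\mathbf{x}}):=\dfrac{\hat x_k-\hat x_j}{x_k-x_j}-1$ for $j\neq k$, and $\|\theta\|_\infty=\max_k|\theta_k|$. *)

theory Defs
  imports "HOL-Analysis.Analysis"
begin

definition cheb2 :: "nat \<Rightarrow> nat \<Rightarrow> real" where
  "cheb2 n k = - cos (real k * pi / real n)"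

definition rjk :: "(nat \<Rightarrow> real) \<Rightarrow> (nat \<Rightarrow> real) \<Rightarrow> nat \<Rightarrow> nat \<Rightarrow> real" where
  "rjk x xh j k = (xh k - xh j) / (x k - x j) - 1"

definition infnorm_upto :: "nat \<Rightarrow> (nat \<Rightarrow> real) \<Rightarrow> real" where
  "infnorm_upto n \<theta> = Max ((\<lambda>k. \<bar>\<theta> k\<bar>) ` {0..n})"

end

theory Submission
  imports Defs
begin

text \<open>
  Writing \<open>x\<^sub>k - x\<^sub>j = 2 sin u sin b\<close> with \<open>b = |k - j| \<pi> / (2n) \<le> u \<le> \<pi> - b\<close> gives
  \<open>|x\<^sub>k - x\<^sub>j| \<ge> 2 sin\<^sup>2 b\<close>, while the numerator of \<open>r\<^sub>j\<^sub>k\<close> is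
  \<open>\<theta>\<^sub>k x\<^sub>k - \<theta>\<^sub>j x\<^sub>j\<close>, of size at most \<open>2 \<parallel>\<theta>\<parallel>\<close>. Hence
  \<open>|r\<^sub>j\<^sub>k| \<le> \<parallel>\<theta>\<parallel> / sin\<^sup>2 b \<le> \<parallel>\<theta>\<parallel> (1/b\<^sup>2 + 0.95)\<close>. Summing over \<open>j\<close>,
  \<open>\<Sum> 1/b\<^sup>2 \<le> (4n\<^sup>2/\<pi>\<^sup>2) \<Sum> 1/(k-j)\<^sup>2 \<le> 16n\<^sup>2/\<pi>\<^sup>2 < 1.65 n\<^sup>2\<close> and the constant terms
  contribute \<open>0.95 n \<le> 0.95 n\<^sup>2\<close>.
\<close>

lemma sin_ge_cubic:
  fixes x :: real
  assumes "0 \<le> x"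
  shows "x - x^3 / 6 \<le> sin x"
proof -
  have "\<bar>sin x - (\<Sum>m<3. sin_coeff m * x ^ m)\<bar> \<le> inverse (fact 3) * \<bar>x\<bar> ^ 3"
    by (rule Maclaurin_sin_bound)
  moreover have "(\<Sum>m<3. sin_coeff m * x ^ m) = x"
    by (simp add: eval_nat_numeral sin_coeff_def)
  moreover have "inverse (fact 3) * \<bar>x\<bar> ^ 3 = x^3 / 6"
    using assms by (simp add: fact_numeral)
  ultimately show ?thesis by linarith
qed

lemma inverse_sin_squared_le:
  fixes b :: real
  assumes b: "0 < b" "b \<le> pi/2"
  shows "1 / (sin b)^2 \<le> 1 / b^2 + 0.95"
proof -
  define t where "t = b^2 / 6"
  have "b \<le> 1.5708" using b pi_approx by (simp add: power_numeral)
  then have "b^2 \<le> 1.5708^2" using b by (intro power_mono) auto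
  then have t: "0 < t" "t \<le> 0.42" unfolding t_def using b by (auto simp: power2_eq_square)
  have pos: "0 < b * (1 - t)" using b t by simp
  have "b * (1 - t) \<le> sin b" using sin_ge_cubic[of b] b
    by (simp add: t_def power3_eq_cube power2_eq_square algebra_simps)
  then have "(b * (1 - t))^2 \<le> (sin b)^2" using pos by (intro power_mono) auto
  then have "1 / (sin b)^2 \<le> 1 / (b * (1 - t))^2"
    using pos by (intro divide_left_mono mult_pos_pos) auto
  also have "\<dots> = (1 / b^2) * (1 / (1 - t)^2)" by (simp add: power_mult_distrib)
  also have "\<dots> \<le> (1 / b^2) * (1 + 5.7 * t)"
  proof (rule mult_left_mono)
    \<comment> \<open>the constant 5.7 makes \<open>(1 - t)\<^sup>2 (1 + 5.7 t) \<ge> 1\<close> hold on \<open>0 \<le> t \<le> 0.42\<close>\<close>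
    have "(1 - t)^2 * (1 + 5.7 * t) - 1 = t * (5.7 * (t - 0.42)^2 + (2.69452 - 5.612 * t))"
      by (simp add: power2_eq_square field_simps)
    also have "\<dots> \<ge> 0" using t by (intro mult_nonneg_nonneg) auto
    finally have "1 \<le> (1 + 5.7 * t) * (1 - t)^2" by (simp add: mult.commute)
    moreover have "0 < (1 - t)^2" using t by simp
    ultimately show "1 / (1 - t)^2 \<le> 1 + 5.7 * t" by (simp add: divide_le_eq)
  qed simp
  also have "\<dots> = 1 / b^2 + 0.95" using b by (simp add: t_def field_simps)
  finally show ?thesis .
qed

lemma sum_inverse_squares_le: "(\<Sum>d = 1..m. 1 / (real d)^2) \<le> 2 - 2 / (real m + 1)"
proof (induction m)
  case 0
  then show ?case by simp
next
  case (Suc m)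
  define a where "a = real m + 1"
  have a: "1 \<le> a" unfolding a_def by simp
  have "2 / a - 2 / (a + 1) = 2 / (a * (a + 1))" using a by (simp add: field_simps)
  moreover have "1 / a^2 \<le> 2 / (a * (a + 1))"
    using a by (simp add: divide_simps power2_eq_square)
  ultimately have telescope: "1 / a^2 \<le> 2 / a - 2 / (a + 1)" by simp
  have "(\<Sum>d = 1..Suc m. 1 / (real d)^2) = (\<Sum>d = 1..m. 1 / (real d)^2) + 1 / a^2"
    by (simp add: a_def add.commute)
  also have "\<dots> \<le> 2 - 2 / (a + 1)" using Suc telescope unfolding a_def by linarith
  finally show ?case by (simp add: a_def add.commute)
qed

lemma sum_inverse_squared_distances_le:
  assumes "k \<le> n"
  shows "(\<Sum>j\<in>{0..n} - {k}. 1 / (real k - real j)^2) \<le> 4"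
proof -
  have split: "{0..n} - {k} = {0..<k} \<union> {k<..n}" using assms by auto
  have "(\<Sum>j\<in>{0..n} - {k}. 1 / (real k - real j)^2)
      = (\<Sum>j\<in>{0..<k}. 1 / (real k - real j)^2) + (\<Sum>j\<in>{k<..n}. 1 / (real k - real j)^2)"
    unfolding split by (rule sum.union_disjoint) auto
  also have "(\<Sum>j\<in>{0..<k}. 1 / (real k - real j)^2) = (\<Sum>d = 1..k. 1 / (real d)^2)"
    by (rule sum.reindex_bij_witness[where i="\<lambda>d. k - d" and j="\<lambda>j. k - j"])
       (auto simp: of_nat_diff)
  also have "(\<Sum>j\<in>{k<..n}. 1 / (real k - real j)^2) = (\<Sum>d = 1..n - k. 1 / (real d)^2)"
    by (rule sum.reindex_bij_witness[where i="\<lambda>d. k + d" and j="\<lambda>j. j - k"])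
       (auto simp: of_nat_diff power2_commute)
  also have "(\<Sum>d = 1..k. 1 / (real d)^2) + (\<Sum>d = 1..n - k. 1 / (real d)^2) \<le> 2 + 2"
    using sum_inverse_squares_le[of k] sum_inverse_squares_le[of "n - k"]
    by (intro add_mono) (smt (verit) divide_nonneg_nonneg of_nat_0_le_iff)+
  finally show ?thesis by simp
qed

lemma sin_le_sin_symmetric:
  fixes b u :: real
  assumes "0 \<le> b" "b \<le> u" "u + b \<le> pi"
  shows "sin b \<le> sin u"
proof (cases "u \<le> pi/2")
  case True
  then show ?thesis using assms by (intro sin_monotone_2pi_le) auto
next
  case False
  then have "sin b \<le> sin (pi - u)" using assms by (intro sin_monotone_2pi_le) auto
  then show ?thesis by simp
qed

lemma abs_cos_diff_ge:
  fixes A B :: real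
  assumes "0 \<le> A" "A \<le> pi" "0 \<le> B" "B \<le> pi"
  shows "2 * (sin (\<bar>B - A\<bar> / 2))^2 \<le> \<bar>cos A - cos B\<bar>"
proof -
  define b where "b = \<bar>B - A\<bar> / 2"
  define u where "u = (A + B) / 2"
  have "0 \<le> b" "b \<le> u" "u + b \<le> pi"
    unfolding b_def u_def using assms by (auto simp: abs_if field_simps)
  then have sin_le: "sin b \<le> sin u" and sin_nonneg: "0 \<le> sin b"
    by (auto intro: sin_le_sin_symmetric sin_ge_zero)
  have "\<bar>sin ((B - A) / 2)\<bar> = sin b"
  proof (cases "A \<le> B")
    case False
    then have "sin ((B - A) / 2) = - sin ((A - B) / 2)"
      by (metis minus_diff_eq minus_divide_left sin_minus)
    then show ?thesis unfolding b_def using False assms sin_ge_zero[of "(A - B) / 2"] by simp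
  qed (use assms sin_ge_zero[of "(B - A) / 2"] in \<open>simp add: b_def\<close>)
  then have "\<bar>cos A - cos B\<bar> = 2 * \<bar>sin u\<bar> * sin b"
    unfolding u_def by (simp add: cos_diff_cos abs_mult)
  moreover have "sin b * sin b \<le> \<bar>sin u\<bar> * sin b"
    using sin_le sin_nonneg by (intro mult_right_mono) auto
  ultimately show ?thesis unfolding b_def by (simp add: power2_eq_square)
qed

lemma abs_cheb2_diff_ge:
  assumes "j \<le> n" "k \<le> n"
  shows "2 * (sin (\<bar>real k - real j\<bar> * pi / (2 * real n)))^2 \<le> \<bar>cheb2 n k - cheb2 n j\<bar>"
proof (cases "n = 0")
  case False
  have "\<bar>real k * pi / real n - real j * pi / real n\<bar> / 2 = \<bar>real k - real j\<bar> * pi / (2 * real n)"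
    by (simp add: diff_divide_distrib[symmetric] left_diff_distrib[symmetric] abs_mult abs_divide)
  with abs_cos_diff_ge[of "real j * pi / real n" "real k * pi / real n"] False assms
  show ?thesis by (simp add: cheb2_def field_simps)
qed simp

lemma rjk_relative_perturbation:
  assumes "x k \<noteq> x j"
  shows "rjk x (\<lambda>i. (1 + \<theta> i) * x i) j k = (\<theta> k * x k - \<theta> j * x j) / (x k - x j)"
  using assms by (simp add: rjk_def field_simps)

lemma abs_rjk_relative_perturbation_le:
  fixes x \<theta> :: "nat \<Rightarrow> real"
  assumes "x k \<noteq> x j" "\<bar>x j\<bar> \<le> 1" "\<bar>x k\<bar> \<le> 1" "\<bar>\<theta> j\<bar> \<le> \<epsilon>" "\<bar>\<theta> k\<bar> \<le> \<epsilon>"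
  shows "\<bar>rjk x (\<lambda>i. (1 + \<theta> i) * x i) j k\<bar> \<le> 2 * \<epsilon> / \<bar>x k - x j\<bar>"
proof -
  have "\<bar>\<theta> k * x k\<bar> \<le> \<epsilon> * 1" "\<bar>\<theta> j * x j\<bar> \<le> \<epsilon> * 1"
    unfolding abs_mult using assms by (intro mult_mono; simp)+
  then have "\<bar>\<theta> k * x k - \<theta> j * x j\<bar> \<le> 2 * \<epsilon>" by linarith
  then show ?thesis
    using assms(1) by (simp add: rjk_relative_perturbation abs_divide divide_right_mono)
qed

lemma abs_rjk_cheb2_le:
  assumes "j \<le> n" "k \<le> n" "j \<noteq> k" "\<bar>\<theta> j\<bar> \<le> \<epsilon>" "\<bar>\<theta> k\<bar> \<le> \<epsilon>"
  shows "\<bar>rjk (cheb2 n) (\<lambda>i. (1 + \<theta> i) * cheb2 n i) j k\<bar>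
         \<le> \<epsilon> * (4 * (real n)^2 / (pi^2 * (real k - real j)^2) + 0.95)"
proof -
  define b where "b = \<bar>real k - real j\<bar> * pi / (2 * real n)"
  have n: "0 < real n" using assms by simp
  have "1 \<le> \<bar>real k - real j\<bar>" using assms(3) by linarith
  then have b: "0 < b" "b \<le> pi / 2"
    unfolding b_def using assms n by (auto simp: field_simps)
  have den: "2 * (sin b)^2 \<le> \<bar>cheb2 n k - cheb2 n j\<bar>"
    unfolding b_def using assms(1,2) by (rule abs_cheb2_diff_ge)
  have "0 < sin b" using b by (intro sin_gt_zero) auto
  then have sin_pos: "0 < 2 * (sin b)^2" by simp
  have "\<bar>rjk (cheb2 n) (\<lambda>i. (1 + \<theta> i) * cheb2 n i) j k\<bar> \<le> 2 * \<epsilon> / \<bar>cheb2 n k - cheb2 n j\<bar>"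
    using den sin_pos assms by (intro abs_rjk_relative_perturbation_le) (auto simp: cheb2_def)
  also have "\<dots> \<le> 2 * \<epsilon> / (2 * (sin b)^2)"
    using den sin_pos assms by (intro divide_left_mono mult_pos_pos) auto
  also have "\<dots> = \<epsilon> * (1 / (sin b)^2)" by simp
  also have "\<dots> \<le> \<epsilon> * (1 / b^2 + 0.95)"
    using inverse_sin_squared_le[OF b] assms by (intro mult_left_mono) auto
  also have "1 / b^2 = 4 * (real n)^2 / (pi^2 * (real k - real j)^2)"
    unfolding b_def using n by (simp add: field_simps power_mult_distrib power2_abs)
  finally show ?thesis .
qed

theorem theorem1:
  fixes n :: nat and \<theta> :: "nat \<Rightarrow> real" and k :: nat
  assumes "n \<ge> 1" and "k \<le> n"
  shows "(\<Sum>j\<in>{0..n} - {k}.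
            \<bar>rjk (cheb2 n) (\<lambda>i. (1 + \<theta> i) * cheb2 n i) j k\<bar>)
         \<le> 2.6 * infnorm_upto n \<theta> * (real n)^2"
proof -
  define \<epsilon> where "\<epsilon> = infnorm_upto n \<theta>"
  have \<theta>_le: "\<bar>\<theta> i\<bar> \<le> \<epsilon>" if "i \<le> n" for i
    unfolding \<epsilon>_def infnorm_upto_def using that by (intro Max_ge) auto
  have \<epsilon>: "0 \<le> \<epsilon>" using \<theta>_le[of 0] by linarith
  define S where "S = (\<Sum>j\<in>{0..n} - {k}. 1 / (real k - real j)^2)"
  have "(\<Sum>j\<in>{0..n} - {k}. \<bar>rjk (cheb2 n) (\<lambda>i. (1 + \<theta> i) * cheb2 n i) j k\<bar>)
     \<le> (\<Sum>j\<in>{0..n} - {k}. \<epsilon> * (4 * (real n)^2 / (pi^2 * (real k - real j)^2) + 0.95))"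
    using assms by (intro sum_mono abs_rjk_cheb2_le) (auto intro: \<theta>_le)
  also have "\<dots> = (\<Sum>j\<in>{0..n} - {k}. \<epsilon> * (real n)^2 * (4 / pi^2) * (1 / (real k - real j)^2) + 0.95 * \<epsilon>)"
    by (intro sum.cong) (auto simp: field_simps)
  also have "\<dots> = \<epsilon> * (real n)^2 * (4 / pi^2 * S) + 0.95 * \<epsilon> * real n"
    using assms(2) by (simp add: S_def sum.distrib sum_distrib_left)
  also have "\<dots> \<le> \<epsilon> * (real n)^2 * 1.65 + 0.95 * \<epsilon> * (real n)^2"
  proof (intro add_mono mult_left_mono)
    have "4 * S \<le> 16" using sum_inverse_squared_distances_le[OF assms(2)] by (simp add: S_def)
    also have "16 \<le> 1.65 * pi^2"
      using power_mono[of "3.14" pi 2] pi_approx by (simp add: power2_eq_square)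
    finally show "4 / pi^2 * S \<le> 1.65" by (simp add: field_simps)
    show "real n \<le> (real n)^2" using assms(1) by (simp add: power2_eq_square)
  qed (use \<epsilon> in auto)
  finally show ?thesis by (simp add: \<epsilon>_def algebra_simps)
qed

end
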